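(* Let $r_0,r_1,r_2\ge 1$ with $r_1<r_0$ and $r_1<r_2$, and let $L=\mathfrak{g}(r_0,r_1,r_2)$. Then $b(L)=r_1(r_0+r_2-r_1)$.
   Context: All Lie algebras are over an algebraically closed field $\mathbf{k}$ of characteristic zero. $\mathcal{P}(r_0,r_1,r_2)$ is the poset on $\{b_1,\dots,b_{r_0},m_1,\dots,m_{r_1},t_1,\dots,t_{r_2}\}$ whose strict relations are exactly $b_i\prec m_j$, $m_j\prec t_k$ and $b_i\prec t_k$ for all $i,j,k$. $\mathfrak{g}(r_0,r_1,r_2)$ denotes the nilpotent Lie poset algebra $\mathfrak{g}^{\prec}(\mathcal{P}(r_0,r_1,r_2))$: the Lie algebra under the commutator bracket spanned by matrix units $E_{p,q}$ with $p\prec q$. The breadth of a Lie algebra $L$ is $b(L)=\max_{x\in L}\operatorname{rank}(\mathrm{ad}_x)$, where $\mathrm{ad}_x=[x,-]$. *)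

theory Defs
  imports "HOL-Computational_Algebra.Polynomial" "HOL-Library.Function_Algebras"
begin

text \<open>Elements of P(r0,r1,r2) are encoded as naturals 0..<r0+r1+r2:
  b_i = i-1 (i=1..r0), m_j = r0+j-1, t_k = r0+r1+k-1.\<close>

definition bot_elts :: "nat \<Rightarrow> nat \<Rightarrow> nat \<Rightarrow> nat set" where
  "bot_elts r0 r1 r2 = {0..<r0}"
definition mid_elts :: "nat \<Rightarrow> nat \<Rightarrow> nat \<Rightarrow> nat set" where
  "mid_elts r0 r1 r2 = {r0..<r0+r1}"
definition top_elts :: "nat \<Rightarrow> nat \<Rightarrow> nat \<Rightarrow> nat set" where
  "top_elts r0 r1 r2 = {r0+r1..<r0+r1+r2}"

definition prec :: "nat \<Rightarrow> nat \<Rightarrow> nat \<Rightarrow> nat \<Rightarrow> nat \<Rightarrow> bool" where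
  "prec r0 r1 r2 p q \<longleftrightarrow>
     (p \<in> bot_elts r0 r1 r2 \<and> q \<in> mid_elts r0 r1 r2) \<or>
     (p \<in> mid_elts r0 r1 r2 \<and> q \<in> top_elts r0 r1 r2) \<or>
     (p \<in> bot_elts r0 r1 r2 \<and> q \<in> top_elts r0 r1 r2)"

definition mscale :: "'k::field \<Rightarrow> (nat \<Rightarrow> nat \<Rightarrow> 'k) \<Rightarrow> (nat \<Rightarrow> nat \<Rightarrow> 'k)" where
  "mscale c x = (\<lambda>p q. c * x p q)"

definition matunit :: "nat \<Rightarrow> nat \<Rightarrow> (nat \<Rightarrow> nat \<Rightarrow> 'k::field)" where
  "matunit p q = (\<lambda>i j. if i = p \<and> j = q then 1 else 0)"

definition lie_poset_alg :: "nat \<Rightarrow> nat \<Rightarrow> nat \<Rightarrow> (nat \<Rightarrow> nat \<Rightarrow> 'k::field) set" where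
  "lie_poset_alg r0 r1 r2 =
     module.span mscale {matunit p q | p q. prec r0 r1 r2 p q}"

definition comm_bracket :: "nat \<Rightarrow> (nat \<Rightarrow> nat \<Rightarrow> 'k::field) \<Rightarrow> (nat \<Rightarrow> nat \<Rightarrow> 'k) \<Rightarrow> (nat \<Rightarrow> nat \<Rightarrow> 'k)" where
  "comm_bracket n x y = (\<lambda>p q. (\<Sum>r<n. x p r * y r q) - (\<Sum>r<n. y p r * x r q))"

definition ad_rank :: "nat \<Rightarrow> (nat \<Rightarrow> nat \<Rightarrow> 'k::field) set \<Rightarrow> (nat \<Rightarrow> nat \<Rightarrow> 'k) \<Rightarrow> nat" where
  "ad_rank n L x = vector_space.dim mscale (comm_bracket n x ` L)"

definition breadth :: "nat \<Rightarrow> (nat \<Rightarrow> nat \<Rightarrow> 'k::field) set \<Rightarrow> nat" where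
  "breadth n L = Max (ad_rank n L ` L)"

end

(* For x in L, the image of ad_x lies in the span of the units E(b, t). Choose at most r1 rows R
   spanning the rows of the b-m block of x and at most r1 columns R' spanning the columns of its m-t
   block. An entry [x, y](s, t) with s not in R and t not in R' is then a combination of entries of
   [x, y] in the rows R and the columns R', so with B and T the bottom and top layers, ad_x(L)
   embeds into the coordinates in B x T outside (B - R) x (T - R'); there are at most
   r0 r2 - (r0 - r1)(r2 - r1) = r1 (r0 + r2 - r1) of them.
   The element sum_i E(b_i, m_i) + E(m_i, t_i) attains the bound: the image of its ad contains
   every E(b, t) with b among b_1..b_r1 or t among t_1..t_r1. *)

theory Submission
  imports Defs
begin

type_synonym 'k mat = "nat \<Rightarrow> nat \<Rightarrow> 'k"

interpretation Mat: vector_space "mscale :: 'k::field \<Rightarrow> 'k mat \<Rightarrow> 'k mat"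
  by unfold_locales (auto simp: mscale_def fun_eq_iff algebra_simps)

lemma mscale_apply [simp]: "mscale c x p q = c * x p q"
  by (simp add: mscale_def)

lemma sum_mat_apply: "(sum f A :: 'k::field mat) p q = (\<Sum>a\<in>A. f a p q)"
  by (induct A rule: infinite_finite_induct) auto

lemma matunit_apply: "matunit a b p q = (if p = a \<and> q = b then 1 else 0)"
  by (simp add: matunit_def)

lemma matunit_eq_iff: "matunit p q = (matunit p' q' :: 'k::field mat) \<longleftrightarrow> p = p' \<and> q = q'"
  by (metis matunit_apply one_neq_zero)

definition matunits :: "(nat \<times> nat) set \<Rightarrow> 'k::field mat set" where
  "matunits C = (\<lambda>(p, q). matunit p q) ` C"

lemma finite_matunits [simp]: "finite C \<Longrightarrow> finite (matunits C :: 'k::field mat set)"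
  by (simp add: matunits_def)

lemma card_matunits: "card (matunits C :: 'k::field mat set) = card C"
  unfolding matunits_def by (rule card_image) (auto simp: inj_on_def matunit_eq_iff)

lemma sum_matunits_apply:
  assumes "finite C"
  shows "(\<Sum>(a, b)\<in>C. mscale (c a b) (matunit a b) :: 'k::field mat) p q
           = (if (p, q) \<in> C then c p q else 0)"
proof -
  have "(\<Sum>(a, b)\<in>C. mscale (c a b) (matunit a b) :: 'k mat) p q
          = (\<Sum>ab\<in>C. if ab = (p, q) then c p q else 0)"
    unfolding sum_mat_apply by (rule sum.cong) (auto simp: matunit_apply split: if_splits)
  then show ?thesis using assms by simp
qed

lemma span_matunits_iff:
  assumes "finite C"
  shows "Z \<in> Mat.span (matunits C) \<longleftrightarrow> (\<forall>p q. (p, q) \<notin> C \<longrightarrow> Z p q = 0)"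
proof
  have "Mat.span (matunits C) \<subseteq> {Z. \<forall>p q. (p, q) \<notin> C \<longrightarrow> Z p q = 0}"
    by (rule Mat.span_minimal) (auto simp: Mat.subspace_def matunits_def matunit_apply)
  then show "Z \<in> Mat.span (matunits C) \<Longrightarrow> \<forall>p q. (p, q) \<notin> C \<longrightarrow> Z p q = 0"
    by blast
next
  assume "\<forall>p q. (p, q) \<notin> C \<longrightarrow> Z p q = 0"
  then have "Z = (\<Sum>(a, b)\<in>C. mscale (Z a b) (matunit a b))"
    by (auto simp: fun_eq_iff sum_matunits_apply[OF assms])
  also have "\<dots> \<in> Mat.span (matunits C)"
    by (auto intro!: Mat.span_sum Mat.span_scale[OF Mat.span_base] simp: matunits_def)
  finally show "Z \<in> Mat.span (matunits C)" .
qed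

lemma independent_matunits:
  assumes "finite C"
  shows "Mat.independent (matunits C :: 'k::field mat set)"
proof (rule Mat.independent_if_scalars_zero)
  show "finite (matunits C :: 'k mat set)"
    using assms by simp
next
  fix f :: "'k mat \<Rightarrow> 'k" and e :: "'k mat"
  assume sum0: "(\<Sum>x\<in>matunits C. mscale (f x) x) = 0" and e: "e \<in> matunits C"
  then obtain p q where pq: "(p, q) \<in> C" "e = matunit p q"
    by (auto simp: matunits_def)
  have "(\<Sum>x\<in>matunits C. mscale (f x) x) p q = (\<Sum>x\<in>matunits C. if x = e then f e else 0)"
    unfolding sum_mat_apply
    by (rule sum.cong) (auto simp: matunits_def pq(2) matunit_apply matunit_eq_iff)
  with sum0 e assms show "f e = 0"
    by (simp add: matunits_def)
qed

lemma dim_le_card_if_determined_on: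
  assumes W: "Mat.subspace W" and C: "finite C"
    and determined: "\<And>Z. Z \<in> W \<Longrightarrow> \<forall>(p, q)\<in>C. Z p q = 0 \<Longrightarrow> Z = 0"
  shows "Mat.dim W \<le> card C"
proof -
  define restrict :: "'a mat \<Rightarrow> 'a mat" where
    "restrict Z = (\<lambda>p q. if (p, q) \<in> C then Z p q else 0)" for Z
  interpret restrict: module_hom mscale mscale restrict
    by (simp add: module_hom_iff Mat.module_axioms restrict_def fun_eq_iff algebra_simps)
  have "inj_on restrict W"
    using determined by (auto simp: restrict.inj_on_iff_eq_0[OF W] restrict_def fun_eq_iff)
  obtain B where B: "B \<subseteq> W" "Mat.independent B" "card B = Mat.dim W"
    using Mat.basis_exists by metis
  have inj_B: "inj_on restrict (Mat.span B)"
    using \<open>inj_on restrict W\<close> Mat.span_minimal[OF B(1) W] by (rule inj_on_subset)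
  have "restrict ` B \<subseteq> Mat.span (matunits C)"
    by (auto simp: span_matunits_iff[OF C] restrict_def)
  then have "card (restrict ` B) \<le> card (matunits C :: 'a mat set)"
    using Mat.independent_span_bound restrict.independent_injective_image[OF B(2) inj_B] C
    by (meson finite_matunits)
  moreover have "card (restrict ` B) = card B"
    using inj_B Mat.span_superset by (metis card_image inj_on_subset)
  ultimately show ?thesis
    using B(3) by (simp add: card_matunits)
qed

lemma card_le_dim_if_matunits_subset:
  assumes C: "finite C" and CW: "matunits C \<subseteq> W" and WT: "W \<subseteq> Mat.span T" "finite T"
  shows "card C \<le> Mat.dim (W :: 'k::field mat set)"
proof -
  obtain B where B: "B \<subseteq> W" "Mat.independent B" "W \<subseteq> Mat.span B" "card B = Mat.dim W"
    using Mat.basis_exists by metis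
  have "finite B"
    using Mat.independent_span_bound[OF WT(2) B(2)] B(1) WT(1) by (meson order_trans)
  moreover have "matunits C \<subseteq> Mat.span B"
    using CW B(3) by (rule order_trans)
  ultimately have "card (matunits C :: 'k mat set) \<le> card B"
    using Mat.independent_span_bound[OF _ independent_matunits[OF C]] by blast
  then show ?thesis
    using B(4) by (simp add: card_matunits)
qed

text \<open>The rows are compared as matrices supported in row \<open>0\<close>.\<close>

lemma exists_spanning_rows:
  fixes f :: "nat \<Rightarrow> nat \<Rightarrow> 'k::field"
  assumes I: "finite I" and J: "finite J"
  obtains R where "R \<subseteq> I" "card R \<le> card J"
    "\<And>s. s \<in> I \<Longrightarrow> \<exists>w. \<forall>j\<in>J. f s j = (\<Sum>r\<in>R. w r * f r j)"
proof -
  define row :: "nat \<Rightarrow> 'k mat" where "row s = (\<lambda>p q. if p = 0 \<and> q \<in> J then f s q else 0)" for s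
  obtain B where B: "B \<subseteq> row ` I" "Mat.independent B" "row ` I \<subseteq> Mat.span B"
    using Mat.basis_exists by metis
  have "row ` I \<subseteq> Mat.span (matunits ({0} \<times> J))"
    by (auto simp: span_matunits_iff J row_def)
  moreover have "finite (matunits ({0} \<times> J) :: 'k mat set)"
    using J by simp
  ultimately have B_card: "finite B" "card B \<le> card (matunits ({0} \<times> J) :: 'k mat set)"
    using Mat.independent_span_bound[OF _ B(2)] B(1) by blast+
  have "card (matunits ({0} \<times> J) :: 'k mat set) = card J"
    by (simp add: card_matunits card_cartesian_product)
  obtain R where R: "R \<subseteq> I" "inj_on row R" "B = row ` R"
    using subset_image_inj[THEN iffD1, OF B(1)] by blast
  have "finite R"
    using R(1) I finite_subset by blast
  show thesis
  proof
    show "R \<subseteq> I" by fact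
    show "card R \<le> card J"
      using R B_card \<open>card (matunits ({0} \<times> J)) = card J\<close> by (simp add: card_image)
  next
    fix s assume "s \<in> I"
    then have "row s \<in> Mat.span (row ` R)"
      using B(3) R(3) by blast
    then obtain u where "row s = (\<Sum>v\<in>row ` R. mscale (u v) v)"
      using Mat.span_finite[of "row ` R"] \<open>finite R\<close> by auto
    also have "\<dots> = (\<Sum>r\<in>R. mscale (u (row r)) (row r))"
      using R(2) by (simp add: sum.reindex)
    finally have entries: "row s 0 j = (\<Sum>r\<in>R. u (row r) * row r 0 j)" for j
      by (simp add: sum_mat_apply)
    have "f s j = (\<Sum>r\<in>R. u (row r) * f r j)" if "j \<in> J" for j
      using entries[of j] that by (simp add: row_def)
    then show "\<exists>w. \<forall>j\<in>J. f s j = (\<Sum>r\<in>R. w r * f r j)"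
      by (intro exI[of _ "\<lambda>r. u (row r)"] ballI)
  qed
qed

lemma module_hom_comm_bracket: "module_hom mscale mscale (comm_bracket n (x :: 'k::field mat))"
  by (simp add: module_hom_iff Mat.module_axioms comm_bracket_def fun_eq_iff
      sum.distrib sum_distrib_left algebra_simps)

lemma comm_bracket_matunit:
  "comm_bracket n x (matunit a b) p q
     = (if q = b \<and> a < n then x p a else 0) - (if p = a \<and> b < n then x b q else (0::'k::field))"
proof -
  have "(\<Sum>r<n. x p r * matunit a b r q) = (\<Sum>r<n. if r = a then (if q = b then x p a else 0) else 0)"
    by (rule sum.cong) (auto simp: matunit_apply)
  moreover have "(\<Sum>r<n. matunit a b p r * x r q) = (\<Sum>r<n. if r = b then (if p = a then x b q else 0) else 0)"
    by (rule sum.cong) (auto simp: matunit_apply)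
  ultimately show ?thesis
    by (simp add: comm_bracket_def)
qed

lemma comm_bracket_bilinear_form:
  fixes x y :: "'k::field mat"
  shows "(\<Sum>p<n. \<Sum>q<n. u p * comm_bracket n x y p q * v q) =
    (\<Sum>r<n. (\<Sum>p<n. u p * x p r) * (\<Sum>q<n. v q * y r q) - (\<Sum>p<n. u p * y p r) * (\<Sum>q<n. v q * x r q))"
proof -
  have "(\<Sum>p<n. \<Sum>q<n. u p * comm_bracket n x y p q * v q) =
    (\<Sum>p<n. \<Sum>q<n. \<Sum>r<n. u p * x p r * (v q * y r q) - u p * y p r * (v q * x r q))"
    by (simp add: comm_bracket_def sum_distrib_left sum_distrib_right sum_subtractf
        right_diff_distrib left_diff_distrib ac_simps)
  also have "\<dots> = (\<Sum>p<n. \<Sum>r<n. \<Sum>q<n. u p * x p r * (v q * y r q) - u p * y p r * (v q * x r q))"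
    by (rule sum.cong[OF refl], rule sum.swap)
  also have "\<dots> = (\<Sum>r<n. \<Sum>p<n. \<Sum>q<n. u p * x p r * (v q * y r q) - u p * y p r * (v q * x r q))"
    by (rule sum.swap)
  also have "\<dots> = (\<Sum>r<n. \<Sum>q<n. \<Sum>p<n. u p * x p r * (v q * y r q) - u p * y p r * (v q * x r q))"
    by (rule sum.cong[OF refl], rule sum.swap)
  also have "\<dots> = (\<Sum>r<n. (\<Sum>p<n. u p * x p r) * (\<Sum>q<n. v q * y r q) - (\<Sum>p<n. u p * y p r) * (\<Sum>q<n. v q * x r q))"
    by (simp add: sum_distrib_left sum_distrib_right sum_subtractf)
  finally show ?thesis .
qed

lemma sum_delta_minus_combination:
  fixes g w :: "nat \<Rightarrow> 'k::field"
  assumes "R \<subseteq> {..<n}" "s < n"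
  shows "(\<Sum>p<n. ((if p = s then 1 else 0) - (if p \<in> R then w p else 0)) * g p)
           = g s - (\<Sum>p\<in>R. w p * g p)"
proof -
  have "(\<Sum>p<n. (if p \<in> R then w p else 0) * g p) = (\<Sum>p<n. if p \<in> R then w p * g p else 0)"
    by (rule sum.cong) auto
  also have "\<dots> = (\<Sum>p\<in>R. w p * g p)"
    using sum.inter_restrict[of "{..<n}" "\<lambda>p. w p * g p" R] assms(1) by (simp add: Int_absorb1)
  moreover have "(\<Sum>p<n. (if p = s then 1 else 0) * g p) = g s"
    using assms(2) by (simp add: if_distrib[of "\<lambda>c. c * _"] cong: if_cong)
  ultimately show ?thesis
    by (simp add: left_diff_distrib sum_subtractf)
qed

lemma sum_sum_delta_minus_combination:
  fixes Z :: "'k::field mat"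
  assumes "R \<subseteq> {..<n}" "R' \<subseteq> {..<n}" "s < n" "t < n" "s \<notin> R" "t \<notin> R'"
    and Z0: "\<And>p q. p \<in> R \<or> q \<in> R' \<Longrightarrow> Z p q = 0"
  shows "(\<Sum>p<n. \<Sum>q<n. ((if p = s then 1 else 0) - (if p \<in> R then w p else 0)) * Z p q
             * ((if q = t then 1 else 0) - (if q \<in> R' then v q else 0))) = Z s t"
proof -
  have "(\<Sum>p<n. \<Sum>q<n. ((if p = s then 1 else 0) - (if p \<in> R then w p else 0)) * Z p q
             * ((if q = t then 1 else 0) - (if q \<in> R' then v q else 0)))
      = (\<Sum>p<n. \<Sum>q<n. if p = s then if q = t then Z s t else 0 else 0)"
    using assms by (intro sum.cong refl) auto
  also have "\<dots> = (\<Sum>p<n. if p = s then Z s t else 0)"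
    using assms(4) by (intro sum.cong refl) auto
  also have "\<dots> = Z s t"
    using assms(3) by simp
  finally show ?thesis .
qed

lemma finite_prec: "finite {(p, q). prec r0 r1 r2 p q}"
proof -
  have "{(p, q). prec r0 r1 r2 p q} \<subseteq> {..<r0+r1+r2} \<times> {..<r0+r1+r2}"
    by (auto simp: prec_def bot_elts_def mid_elts_def top_elts_def)
  then show ?thesis
    by (rule finite_subset) auto
qed

lemma mem_lie_poset_alg_iff:
  "x \<in> lie_poset_alg r0 r1 r2 \<longleftrightarrow> (\<forall>p q. \<not> prec r0 r1 r2 p q \<longrightarrow> x p q = (0::'k::field))"
proof -
  have "lie_poset_alg r0 r1 r2 = (Mat.span (matunits {(p, q). prec r0 r1 r2 p q}) :: 'k mat set)"
    unfolding lie_poset_alg_def matunits_def by (rule arg_cong[where f = Mat.span]) auto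
  then show ?thesis
    by (simp add: span_matunits_iff[OF finite_prec])
qed

lemma subspace_lie_poset_alg: "Mat.subspace (lie_poset_alg r0 r1 r2 :: 'k::field mat set)"
  unfolding lie_poset_alg_def by (rule Mat.subspace_span)

text \<open>The only chains of length two are \<open>b \<prec> m \<prec> t\<close>, so brackets live in the \<open>b\<close>-\<open>t\<close> block.\<close>

lemma comm_bracket_lie_poset_alg_eq_0:
  fixes x y :: "'k::field mat"
  assumes "x \<in> lie_poset_alg r0 r1 r2" "y \<in> lie_poset_alg r0 r1 r2"
    and "\<not> (p \<in> bot_elts r0 r1 r2 \<and> q \<in> top_elts r0 r1 r2)"
  shows "comm_bracket n x y p q = 0"
proof -
  have "\<not> (prec r0 r1 r2 p r \<and> prec r0 r1 r2 r q)" for r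
    using assms(3) by (auto simp: prec_def bot_elts_def mid_elts_def top_elts_def)
  then have "x p r * y r q = 0" "y p r * x r q = 0" for r
    using assms(1,2) unfolding mem_lie_poset_alg_iff by (metis mult_eq_0_iff)+
  then show ?thesis
    by (simp only: comm_bracket_def sum.neutral_const diff_self)
qed

text \<open>Pair \<open>[x, y]\<close> with \<open>u = e\<^sub>s - w\<close> on the left and \<open>u' = e\<^sub>t - v\<close> on the right.
  By \<open>Z0\<close> this gives \<open>[x, y]\<^sub>s\<^sub>t\<close>; expanded over the middle index it gives \<open>0\<close>, because only
  middle indices contribute and there \<open>u\<^sup>T x\<close> and \<open>x u'\<close> vanish by \<open>row\<close> and \<open>col\<close>.\<close>

lemma comm_bracket_entry_eq_0:
  fixes x y :: "'k::field mat" and r0 r1 r2 :: nat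
  defines "n \<equiv> r0 + r1 + r2"
  assumes x: "x \<in> lie_poset_alg r0 r1 r2" and y: "y \<in> lie_poset_alg r0 r1 r2"
    and R: "R \<subseteq> bot_elts r0 r1 r2" and R': "R' \<subseteq> top_elts r0 r1 r2"
    and s: "s \<in> bot_elts r0 r1 r2 - R" and t: "t \<in> top_elts r0 r1 r2 - R'"
    and row: "\<And>j. j \<in> mid_elts r0 r1 r2 \<Longrightarrow> x s j = (\<Sum>p\<in>R. w p * x p j)"
    and col: "\<And>j. j \<in> mid_elts r0 r1 r2 \<Longrightarrow> x j t = (\<Sum>q\<in>R'. v q * x j q)"
    and Z0: "\<And>p q. p \<in> R \<or> q \<in> R' \<Longrightarrow> comm_bracket n x y p q = 0"
  shows "comm_bracket n x y s t = 0"
proof -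
  define u where "u p = (if p = s then 1 else 0) - (if p \<in> R then w p else 0)" for p
  define u' where "u' q = (if q = t then 1 else 0) - (if q \<in> R' then v q else 0)" for q
  have bounds: "R \<subseteq> {..<n}" "R' \<subseteq> {..<n}" "s < n" "t < n"
    using R R' s t by (auto simp: n_def bot_elts_def top_elts_def)
  have term_eq_0: "(\<Sum>p<n. u p * x p r) * (\<Sum>q<n. u' q * y r q)
                    - (\<Sum>p<n. u p * y p r) * (\<Sum>q<n. u' q * x r q) = 0" for r
  proof -
    consider "r \<in> bot_elts r0 r1 r2" | "r \<in> mid_elts r0 r1 r2" | "r \<notin> bot_elts r0 r1 r2 \<union> mid_elts r0 r1 r2"
      by blast
    then show ?thesis
    proof cases
      case 1
      then have "x p r = 0" "y p r = 0" for p
        using x y by (auto simp: mem_lie_poset_alg_iff prec_def bot_elts_def mid_elts_def top_elts_def)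
      then show ?thesis by simp
    next
      case 2
      have "(\<Sum>p<n. u p * x p r) = x s r - (\<Sum>p\<in>R. w p * x p r)"
        unfolding u_def by (rule sum_delta_minus_combination[OF bounds(1,3)])
      moreover have "(\<Sum>q<n. u' q * x r q) = x r t - (\<Sum>q\<in>R'. v q * x r q)"
        unfolding u'_def by (rule sum_delta_minus_combination[OF bounds(2,4)])
      ultimately show ?thesis
        using row[OF 2] col[OF 2] by simp
    next
      case 3
      then have "x r q = 0" "y r q = 0" for q
        using x y by (auto simp: mem_lie_poset_alg_iff prec_def bot_elts_def mid_elts_def top_elts_def)
      then show ?thesis by simp
    qed
  qed
  have "comm_bracket n x y s t = (\<Sum>p<n. \<Sum>q<n. u p * comm_bracket n x y p q * u' q)"
    unfolding u_def u'_def using bounds s t Z0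
    by (intro sum_sum_delta_minus_combination[symmetric]) auto
  also have "\<dots> = 0"
    unfolding comm_bracket_bilinear_form using term_eq_0 by simp
  finally show ?thesis .
qed

lemma comm_bracket_eq_0_if_eq_0_on_rows_cols:
  fixes x y :: "'k::field mat"
  assumes x: "x \<in> lie_poset_alg r0 r1 r2" and y: "y \<in> lie_poset_alg r0 r1 r2"
    and R: "R \<subseteq> bot_elts r0 r1 r2" and R': "R' \<subseteq> top_elts r0 r1 r2"
    and row: "\<forall>s\<in>bot_elts r0 r1 r2. \<forall>j\<in>mid_elts r0 r1 r2. x s j = (\<Sum>p\<in>R. w s p * x p j)"
    and col: "\<forall>t\<in>top_elts r0 r1 r2. \<forall>j\<in>mid_elts r0 r1 r2. x j t = (\<Sum>q\<in>R'. v t q * x j q)"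
    and Z0: "\<And>p q. p \<in> R \<or> q \<in> R' \<Longrightarrow> comm_bracket (r0 + r1 + r2) x y p q = 0"
  shows "comm_bracket (r0 + r1 + r2) x y = 0"
proof (intro ext)
  fix s t
  consider "s \<in> bot_elts r0 r1 r2 - R" "t \<in> top_elts r0 r1 r2 - R'" | "s \<in> R \<or> t \<in> R'"
    | "\<not> (s \<in> bot_elts r0 r1 r2 \<and> t \<in> top_elts r0 r1 r2)"
    using R R' by blast
  then show "comm_bracket (r0 + r1 + r2) x y s t = 0 s t"
  proof cases
    case 1
    then show ?thesis
      using comm_bracket_entry_eq_0[OF x y R R' 1 row[rule_format, of s] col[rule_format, of t] Z0] by simp
  qed (simp_all add: Z0 comm_bracket_lie_poset_alg_eq_0[OF x y])
qed

lemma card_bot_top_diff: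
  assumes "S \<subseteq> bot_elts r0 r1 r2" "T \<subseteq> top_elts r0 r1 r2"
  shows "card (bot_elts r0 r1 r2 \<times> top_elts r0 r1 r2 - S \<times> T) = r0 * r2 - card S * card T"
  using assms by (subst card_Diff_subset)
    (auto simp: bot_elts_def top_elts_def card_cartesian_product intro: finite_subset)

lemma product_minus_complement_product:
  fixes r0 r1 r2 :: nat
  assumes "r1 \<le> r0" "r1 \<le> r2"
  shows "r0 * r2 - (r0 - r1) * (r2 - r1) = r1 * (r0 + r2 - r1)"
proof -
  obtain c d where "r0 = r1 + c" "r2 = r1 + d"
    using assms le_Suc_ex by blast
  then show ?thesis
    by (simp add: algebra_simps)
qed

lemma card_bot_top_diff_le:
  assumes r: "r1 \<le> r0" "r1 \<le> r2"
    and R: "R \<subseteq> bot_elts r0 r1 r2" "card R \<le> card (mid_elts r0 r1 r2)"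
    and R': "R' \<subseteq> top_elts r0 r1 r2" "card R' \<le> card (mid_elts r0 r1 r2)"
  shows "card (bot_elts r0 r1 r2 \<times> top_elts r0 r1 r2
                 - (bot_elts r0 r1 r2 - R) \<times> (top_elts r0 r1 r2 - R')) \<le> r1 * (r0 + r2 - r1)"
proof -
  have "r0 - r1 \<le> card (bot_elts r0 r1 r2 - R)" "r2 - r1 \<le> card (top_elts r0 r1 r2 - R')"
    using R R' by (simp_all add: card_Diff_subset finite_subset bot_elts_def mid_elts_def top_elts_def)
  then have "r0 * r2 - card (bot_elts r0 r1 r2 - R) * card (top_elts r0 r1 r2 - R')
               \<le> r0 * r2 - (r0 - r1) * (r2 - r1)"
    by (intro diff_le_mono2 mult_le_mono)
  then show ?thesis
    by (subst card_bot_top_diff) (auto simp: product_minus_complement_product[OF r])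
qed

lemma ad_rank_lie_poset_alg_le:
  fixes x :: "'k::field mat"
  assumes r: "r1 \<le> r0" "r1 \<le> r2" and x: "x \<in> lie_poset_alg r0 r1 r2"
  shows "ad_rank (r0 + r1 + r2) (lie_poset_alg r0 r1 r2) x \<le> r1 * (r0 + r2 - r1)"
proof -
  let ?n = "r0 + r1 + r2" and ?L = "lie_poset_alg r0 r1 r2 :: 'k mat set"
  let ?bot = "bot_elts r0 r1 r2" and ?mid = "mid_elts r0 r1 r2" and ?top = "top_elts r0 r1 r2"
  have fin: "finite ?bot" "finite ?mid" "finite ?top"
    by (simp_all add: bot_elts_def mid_elts_def top_elts_def)
  obtain R where R: "R \<subseteq> ?bot" "card R \<le> card ?mid"
    and rows: "\<And>s. s \<in> ?bot \<Longrightarrow> \<exists>w. \<forall>j\<in>?mid. x s j = (\<Sum>p\<in>R. w p * x p j)"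
    by (rule exists_spanning_rows[OF fin(1,2), where f = x]) blast
  from bchoice[OF ballI[OF rows]] obtain w
    where row: "\<forall>s\<in>?bot. \<forall>j\<in>?mid. x s j = (\<Sum>p\<in>R. w s p * x p j)" ..
  obtain R' where R': "R' \<subseteq> ?top" "card R' \<le> card ?mid"
    and cols: "\<And>t. t \<in> ?top \<Longrightarrow> \<exists>v. \<forall>j\<in>?mid. x j t = (\<Sum>q\<in>R'. v q * x j q)"
    by (rule exists_spanning_rows[OF fin(3,2), where f = "\<lambda>t j. x j t"]) blast
  from bchoice[OF ballI[OF cols]] obtain v
    where col: "\<forall>t\<in>?top. \<forall>j\<in>?mid. x j t = (\<Sum>q\<in>R'. v t q * x j q)" ..
  define C where "C = ?bot \<times> ?top - (?bot - R) \<times> (?top - R')"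
  have "Mat.dim (comm_bracket ?n x ` ?L) \<le> card C"
  proof (rule dim_le_card_if_determined_on)
    show "Mat.subspace (comm_bracket ?n x ` ?L)"
      by (rule module_hom.subspace_image[OF module_hom_comm_bracket subspace_lie_poset_alg])
    show "finite C"
      using fin by (simp add: C_def)
  next
    fix Z assume "Z \<in> comm_bracket ?n x ` ?L" and Z_C: "\<forall>(p, q)\<in>C. Z p q = 0"
    then obtain y where y: "y \<in> ?L" and Z: "Z = comm_bracket ?n x y"
      by blast
    show "Z = 0"
      unfolding Z
    proof (rule comm_bracket_eq_0_if_eq_0_on_rows_cols[OF x y R(1) R'(1) row col])
      fix p q assume "p \<in> R \<or> q \<in> R'"
      then show "comm_bracket ?n x y p q = 0"
        using Z_C comm_bracket_lie_poset_alg_eq_0[OF x y, of p q] unfolding Z C_def by blast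
    qed
  qed
  also have "card C \<le> r1 * (r0 + r2 - r1)"
    unfolding C_def using r R R' by (rule card_bot_top_diff_le)
  finally show ?thesis
    unfolding ad_rank_def .
qed

text \<open>The sum of \<open>E(b\<^sub>i, m\<^sub>i) + E(m\<^sub>i, t\<^sub>i)\<close> over \<open>i < r1\<close>.\<close>

definition matching_elt :: "nat \<Rightarrow> nat \<Rightarrow> 'k::field mat" where
  "matching_elt r0 r1 =
     (\<lambda>p q. if (p < r1 \<and> q = r0 + p) \<or> (r0 \<le> p \<and> p < r0 + r1 \<and> q = p + r1) then 1 else 0)"

lemma matching_elt_mem:
  assumes "r1 \<le> r0" "r1 \<le> r2"
  shows "matching_elt r0 r1 \<in> (lie_poset_alg r0 r1 r2 :: 'k::field mat set)"
  using assms
  by (auto simp: mem_lie_poset_alg_iff matching_elt_def prec_def bot_elts_def mid_elts_def top_elts_def)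

text \<open>With \<open>x\<close> the matching element, \<open>[x, E(m\<^sub>i, t)] = E(b\<^sub>i, t)\<close> and \<open>[x, E(b, m\<^sub>j)] = -E(b, t\<^sub>j)\<close>.\<close>

lemma matunit_mem_ad_matching_elt_image:
  assumes r: "r1 \<le> r0" "r1 \<le> r2"
    and pq: "p \<in> bot_elts r0 r1 r2" "q \<in> top_elts r0 r1 r2" "p < r1 \<or> q < r0 + r1 + r1"
  shows "matunit p q \<in> comm_bracket (r0 + r1 + r2) (matching_elt r0 r1) `
           (lie_poset_alg r0 r1 r2 :: 'k::field mat set)"
proof -
  let ?n = "r0 + r1 + r2" and ?L = "lie_poset_alg r0 r1 r2 :: 'k mat set"
  let ?x = "matching_elt r0 r1 :: 'k mat"
  show ?thesis
  proof (cases "p < r1")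
    case True
    then have "matunit p q = comm_bracket ?n ?x (matunit (r0 + p) q)"
      using pq r by (auto simp: fun_eq_iff comm_bracket_matunit matching_elt_def matunit_apply
          bot_elts_def top_elts_def)
    moreover have "matunit (r0 + p) q \<in> ?L"
      using True pq by (auto simp: mem_lie_poset_alg_iff matunit_apply prec_def
          bot_elts_def mid_elts_def top_elts_def)
    ultimately show ?thesis
      by blast
  next
    case False
    then obtain j where j: "q = r0 + r1 + j" "j < r1"
      using pq by (intro that[of "q - (r0 + r1)"]) (auto simp: top_elts_def)
    have "matunit p q = mscale (-1) (comm_bracket ?n ?x (matunit p (r0 + j)))"
      using pq r j by (auto simp: fun_eq_iff comm_bracket_matunit matching_elt_def matunit_apply
          bot_elts_def top_elts_def)
    also have "\<dots> = comm_bracket ?n ?x (mscale (-1) (matunit p (r0 + j)))"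
      by (simp only: module_hom.scale[OF module_hom_comm_bracket])
    finally show ?thesis
      using pq j Mat.subspace_scale[OF subspace_lie_poset_alg]
      by (auto simp: mem_lie_poset_alg_iff matunit_apply prec_def
          bot_elts_def mid_elts_def top_elts_def)
  qed
qed

lemma ad_rank_matching_elt_ge:
  assumes r: "r1 \<le> r0" "r1 \<le> r2"
  shows "r1 * (r0 + r2 - r1)
           \<le> ad_rank (r0 + r1 + r2) (lie_poset_alg r0 r1 r2 :: 'k::field mat set) (matching_elt r0 r1)"
proof -
  let ?W = "comm_bracket (r0 + r1 + r2) (matching_elt r0 r1) ` (lie_poset_alg r0 r1 r2 :: 'k mat set)"
  let ?bot = "bot_elts r0 r1 r2" and ?top = "top_elts r0 r1 r2"
  define C where "C = ?bot \<times> ?top - {r1..<r0} \<times> {r0 + r1 + r1..<r0 + r1 + r2}"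
  have units_W: "matunits C \<subseteq> ?W"
    by (auto simp: matunits_def C_def bot_elts_def top_elts_def
        intro!: matunit_mem_ad_matching_elt_image[OF r])
  have fin: "finite C" "finite (?bot \<times> ?top)"
    by (simp_all add: C_def bot_elts_def top_elts_def)
  have "?W \<subseteq> Mat.span (matunits (?bot \<times> ?top))"
    using fin(2)
    by (auto simp: span_matunits_iff intro!: comm_bracket_lie_poset_alg_eq_0 matching_elt_mem[OF r])
  then have "card C \<le> Mat.dim ?W"
    by (rule card_le_dim_if_matunits_subset[OF fin(1) units_W]) (simp add: fin(2))
  moreover have "card C = r1 * (r0 + r2 - r1)"
    unfolding C_def using r
    by (subst card_bot_top_diff) (auto simp: bot_elts_def top_elts_def product_minus_complement_product)
  ultimately show ?thesis
    unfolding ad_rank_def by simp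
qed

theorem theorem5:
  fixes r0 r1 r2 :: nat
  assumes "r0 \<ge> 1" "r1 \<ge> 1" "r2 \<ge> 1" "r1 < r0" "r1 < r2"
  shows "breadth (r0 + r1 + r2)
           (lie_poset_alg r0 r1 r2 :: (nat \<Rightarrow> nat \<Rightarrow> 'k::{alg_closed_field, field_char_0}) set)
         = r1 * (r0 + r2 - r1)"
proof -
  let ?L = "lie_poset_alg r0 r1 r2 :: 'k mat set"
  let ?rank = "ad_rank (r0 + r1 + r2) ?L" and ?b = "r1 * (r0 + r2 - r1)"
  have r: "r1 \<le> r0" "r1 \<le> r2"
    using assms by simp_all
  have le: "?rank x \<le> ?b" if "x \<in> ?L" for x
    using ad_rank_lie_poset_alg_le[OF r that] .
  have "?rank (matching_elt r0 r1) = ?b"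
    using le[OF matching_elt_mem[OF r]] ad_rank_matching_elt_ge[OF r] by (rule le_antisym)
  then have attained: "?b \<in> ?rank ` ?L"
    by (rule image_eqI[OF sym matching_elt_mem[OF r]])
  have bounded: "?rank ` ?L \<subseteq> {..?b}"
    using le by blast
  have "Max (?rank ` ?L) = ?b"
    by (rule Max_eqI[OF finite_subset[OF bounded finite_atMost] _ attained]) (use bounded in blast)
  then show ?thesis
    unfolding breadth_def .
qed

end
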